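(* Let $Z$ be a random vector in $\mathbb{R}^d$ and $X_\ell, X_{\ell-1}$ discrete random variables (finite or countable support) such that $\|Z\|_2 \le B$ almost surely for some $B \ge 0$, and such that $X_{\ell-1} \to X_\ell \to Z$ is a Markov chain (i.e. $Z$ and $X_{\ell-1}$ are conditionally independent given $X_\ell$). Then $$\mathbb{E}\big[\|\mathbb{E}[Z\mid X_\ell] - \mathbb{E}[Z\mid X_{\ell-1}]\|_2^2\big] \le 2B^2\, H(X_\ell \mid X_{\ell-1}),$$ where $H(\cdot\mid\cdot)$ denotes conditional Shannon entropy measured in nats. *)

theory Defs
  imports "HOL-Probability.Probability"
begin

text \<open>Elementary conditional expectation of a vector-valued random variable Z given a
discrete random variable X, evaluated at the outcome w:
E[Z | X = X w] = E[Z 1{X = X w}] / P(X = X w)  (0 on null atoms, which is irrelevant a.s.).\<close>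
definition cexp_disc :: "'a measure \<Rightarrow> ('a \<Rightarrow> 'v::{banach,second_countable_topology}) \<Rightarrow> ('a \<Rightarrow> 'b) \<Rightarrow> 'a \<Rightarrow> 'v" where
  "cexp_disc M Z X w =
     (let A = {v \<in> space M. X v = X w}
      in if measure M A = 0 then 0
         else (1 / measure M A) *\<^sub>R (\<integral>v. indicator A v *\<^sub>R Z v \<partial>M))"

definition markov_chain3 :: "'a measure \<Rightarrow> ('a \<Rightarrow> 'c) \<Rightarrow> ('a \<Rightarrow> 'b) \<Rightarrow> ('a \<Rightarrow> 'v::topological_space) \<Rightarrow> bool" where
  "markov_chain3 M X0 X1 Z \<longleftrightarrow>
     (\<forall>x0 x1 A. A \<in> sets borel \<longrightarrow>
        measure M {w \<in> space M. Z w \<in> A \<and> X0 w = x0 \<and> X1 w = x1} * measure M {w \<in> space M. X1 w = x1}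
        = measure M {w \<in> space M. Z w \<in> A \<and> X1 w = x1} * measure M {w \<in> space M. X0 w = x0 \<and> X1 w = x1})"

text \<open>Conditional Shannon entropy H(X | Y) in nats of discrete random variables,
H(X|Y) = sum_{x,y} p(x,y) ln (p(y) / p(x,y)), as an extended nonnegative real
(it may be infinite for countably infinite supports).\<close>
definition cond_entropy_disc :: "'a measure \<Rightarrow> ('a \<Rightarrow> 'b) \<Rightarrow> ('a \<Rightarrow> 'c) \<Rightarrow> ennreal" where
  "cond_entropy_disc M X Y =
     (\<integral>\<^sup>+ xy. ennreal
        (let pxy = measure M {w \<in> space M. X w = fst xy \<and> Y w = snd xy};
             py = measure M {w \<in> space M. Y w = snd xy}
         in if pxy = 0 then 0 else pxy * ln (py / pxy)) \<partial>count_space UNIV)"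

end

theory Submission
  imports Defs
begin

text \<open>Conditioning on X0 = b averages E[Z | X1 = a, X0 = b], with weight
t = P(X1 = a | X0 = b), against means over the other atoms, all bounded by B; hence
\<open>\<parallel>E[Z | X1 = a, X0 = b] - E[Z | X0 = b]\<parallel> \<le> 2 B (1 - t)\<close>. By the Markov property
E[Z | X1 = a, X0 = b] = E[Z | X1 = a]. Finally \<open>4 (1 - t)\<^sup>2 \<le> -2 ln t\<close>, and averaging
over P(X1 = a, X0 = b) turns \<open>-ln t\<close> into the conditional entropy.\<close>

lemma ln_le_neg_two_mul_sq:
  fixes t :: real
  assumes "0 < t" "t \<le> 1"
  shows "ln t \<le> - 2 * (1 - t)\<^sup>2"
proof -
  let ?g = "\<lambda>x::real. ln x + 2 * (1 - x)\<^sup>2"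
  have "?g t \<le> ?g 1"
  proof (rule DERIV_nonneg_imp_nondecreasing[OF assms(2)])
    fix x :: real
    assume "t \<le> x" "x \<le> 1"
    then have x: "0 < x" using assms by linarith
    have "DERIV ?g x :> 1 / x - 4 * (1 - x)"
      using x by (auto intro!: derivative_eq_intros)
    moreover have "1 / x - 4 * (1 - x) = (1 - 2 * x)\<^sup>2 / x"
      using x by (simp add: field_simps power2_eq_square)
    ultimately show "\<exists>y. DERIV ?g x :> y \<and> y \<ge> 0"
      using x by auto
  qed
  then show ?thesis by simp
qed

lemma nn_integral_comp_discrete:
  fixes X :: "'a \<Rightarrow> 'd::countable" and f :: "'d \<Rightarrow> ennreal"
  assumes X: "X \<in> measurable M (count_space UNIV)"
  shows "(\<integral>\<^sup>+ w. f (X w) \<partial>M)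
    = (\<integral>\<^sup>+ x. f x * emeasure M {w \<in> space M. X w = x} \<partial>count_space UNIV)"
proof -
  have atom: "{w \<in> space M. X w = x} \<in> sets M" for x
    using X by measurable
  have "(\<integral>\<^sup>+ w. f (X w) \<partial>M)
      = (\<integral>\<^sup>+ w. \<integral>\<^sup>+ x. f x * indicator {w \<in> space M. X w = x} w \<partial>count_space UNIV \<partial>M)"
  proof (rule nn_integral_cong)
    fix w
    assume "w \<in> space M"
    then have "(\<integral>\<^sup>+ x. f x * indicator {w \<in> space M. X w = x} w \<partial>count_space UNIV)
        = (\<integral>\<^sup>+ x. f x * indicator {X w} x \<partial>count_space UNIV)"
      by (intro nn_integral_cong) (auto split: split_indicator)
    then show "f (X w)
        = (\<integral>\<^sup>+ x. f x * indicator {w \<in> space M. X w = x} w \<partial>count_space UNIV)"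
      by simp
  qed
  also have "\<dots> = (\<integral>\<^sup>+ x. \<integral>\<^sup>+ w. f x * indicator {w \<in> space M. X w = x} w \<partial>M \<partial>count_space UNIV)"
    using atom by (intro nn_integral_count_space_nn_integral) auto
  also have "\<dots> = (\<integral>\<^sup>+ x. f x * emeasure M {w \<in> space M. X w = x} \<partial>count_space UNIV)"
    by (intro nn_integral_cong nn_integral_cmult_indicator atom)
  finally show ?thesis .
qed

definition set_mean :: "'a measure \<Rightarrow> ('a \<Rightarrow> 'v::{banach,second_countable_topology}) \<Rightarrow> 'a set \<Rightarrow> 'v"
  where "set_mean M Z A =
    (if measure M A = 0 then 0 else (1 / measure M A) *\<^sub>R (\<integral>v. indicator A v *\<^sub>R Z v \<partial>M))"

lemma cexp_disc_eq_set_mean: "cexp_disc M Z X w = set_mean M Z {v \<in> space M. X v = X w}"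
  by (simp add: cexp_disc_def set_mean_def Let_def)

lemma set_integral_eq_measure_scaleR_set_mean:
  "(\<integral>v. indicator A v *\<^sub>R Z v \<partial>M) = measure M A *\<^sub>R set_mean M Z A" if "measure M A \<noteq> 0"
  using that by (simp add: set_mean_def)

lemma (in finite_measure) norm_set_integral_le:
  fixes Z :: "'a \<Rightarrow> 'v::{banach,second_countable_topology}"
  assumes Z: "Z \<in> borel_measurable M" and ZB: "AE w in M. norm (Z w) \<le> B" and A: "A \<in> sets M"
  shows "norm (\<integral>v. indicator A v *\<^sub>R Z v \<partial>M) \<le> B * measure M A"
proof -
  have "integrable M Z"
    using Z ZB by (intro integrable_const_bound[of _ B]) auto
  then have "integrable M (\<lambda>v. norm (indicator A v *\<^sub>R Z v))"
    using A by (intro integrable_norm integrable_mult_indicator)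
  moreover have "integrable M (\<lambda>v. B * indicator A v)"
    using A by (simp add: less_top[symmetric])
  moreover have "AE v in M. norm (indicator A v *\<^sub>R Z v) \<le> B * indicator A v"
    using ZB by eventually_elim (auto split: split_indicator)
  ultimately have "(\<integral>v. norm (indicator A v *\<^sub>R Z v) \<partial>M) \<le> (\<integral>v. B * indicator A v \<partial>M)"
    by (rule integral_mono_AE)
  then show ?thesis
    using A by (intro order.trans[OF integral_norm_bound]) simp
qed

lemma (in finite_measure) norm_set_mean_le:
  assumes "Z \<in> borel_measurable M" "AE w in M. norm (Z w) \<le> B" "A \<in> sets M"
    and "0 < measure M A"
  shows "norm (set_mean M Z A) \<le> B"
  using norm_set_integral_le[OF assms(1-3)] assms(4)
  by (simp add: set_mean_def field_simps)

lemma (in finite_measure) norm_set_mean_diff_le: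
  assumes Z: "Z \<in> borel_measurable M" and ZB: "AE w in M. norm (Z w) \<le> B"
    and E: "E \<in> sets M" and F: "F \<in> sets M" and "E \<subseteq> F" and pos: "0 < measure M E"
  shows "norm (set_mean M Z E - set_mean M Z F) \<le> 2 * B * (1 - measure M E / measure M F)"
proof -
  define e f where "e = measure M E" and "f = measure M F"
  define m where "m = set_mean M Z E"
  define W where "W = (\<integral>v. indicator (F - E) v *\<^sub>R Z v \<partial>M)"
  have "e \<le> f"
    unfolding e_def f_def using \<open>E \<subseteq> F\<close> F by (rule finite_measure_mono)
  then have "0 < f"
    using pos unfolding e_def by linarith
  have "integrable M Z"
    using Z ZB by (intro integrable_const_bound[of _ B]) auto
  then have "(\<integral>v. indicator E v *\<^sub>R Z v + indicator (F - E) v *\<^sub>R Z v \<partial>M)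
      = (\<integral>v. indicator E v *\<^sub>R Z v \<partial>M) + W"
    unfolding W_def using E F by (intro Bochner_Integration.integral_add integrable_mult_indicator) auto
  moreover have "indicator E v *\<^sub>R Z v + indicator (F - E) v *\<^sub>R Z v = indicator F v *\<^sub>R Z v" for v
    using \<open>E \<subseteq> F\<close> by (auto split: split_indicator)
  ultimately have "(\<integral>v. indicator F v *\<^sub>R Z v \<partial>M) = e *\<^sub>R m + W"
    using pos unfolding e_def m_def by (simp add: set_integral_eq_measure_scaleR_set_mean)
  then have "set_mean M Z F = (1 / f) *\<^sub>R (e *\<^sub>R m + W)"
    using \<open>0 < f\<close> unfolding f_def set_mean_def by simp
  then have "m - set_mean M Z F = (1 / f) *\<^sub>R ((f - e) *\<^sub>R m - W)"
    using \<open>0 < f\<close> by (simp add: algebra_simps)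
  moreover have "norm ((f - e) *\<^sub>R m - W) \<le> (f - e) * B + B * (f - e)"
  proof (rule order.trans[OF norm_triangle_ineq4 add_mono])
    show "norm ((f - e) *\<^sub>R m) \<le> (f - e) * B"
      using norm_set_mean_le[OF Z ZB E pos] \<open>e \<le> f\<close> unfolding m_def
      by (simp add: mult_left_mono)
    show "norm W \<le> B * (f - e)"
      using norm_set_integral_le[OF Z ZB, of "F - E"] \<open>E \<subseteq> F\<close> E F
      unfolding W_def e_def f_def by (simp add: finite_measure_Diff)
  qed
  ultimately have "norm (m - set_mean M Z F) \<le> (1 / f) * ((f - e) * B + B * (f - e))"
    using \<open>0 < f\<close> by (simp add: divide_right_mono)
  also have "\<dots> = 2 * B * (1 - e / f)"
    using \<open>0 < f\<close> by (simp add: field_simps)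
  finally show ?thesis
    unfolding m_def e_def f_def .
qed

lemma (in finite_measure) set_integral_eq_scaleR_if_proportional:
  fixes Z :: "'a \<Rightarrow> 'v::{banach,second_countable_topology}"
  assumes Z: "Z \<in> borel_measurable M" and E: "E \<in> sets M" and F: "F \<in> sets M" and "0 \<le> c"
    and proportional: "\<And>A. A \<in> sets borel \<Longrightarrow> measure M (E \<inter> Z -` A) = c * measure M (F \<inter> Z -` A)"
  shows "(\<integral>v. indicator E v *\<^sub>R Z v \<partial>M) = c *\<^sub>R (\<integral>v. indicator F v *\<^sub>R Z v \<partial>M)"
proof -
  define law where "law S = distr (density M (\<lambda>v. ennreal (indicator S v))) borel Z" for S
  have Z_restricted: "Z \<in> borel_measurable (density M (\<lambda>v. ennreal (indicator S v)))" for S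
    using Z by simp
  have integral_law: "(\<integral>v. indicator S v *\<^sub>R Z v \<partial>M) = (\<integral>x. x \<partial>law S)" if "S \<in> sets M" for S
    unfolding law_def using that Z
    by (simp add: integral_distr[OF Z_restricted] integral_density)
  have emeasure_law: "emeasure (law S) A = measure M (S \<inter> Z -` A)"
    if "S \<in> sets M" "A \<in> sets borel" for S A
  proof -
    have "Z -` A \<inter> space M \<in> sets M"
      using Z that(2) by (rule measurable_sets)
    moreover have "S \<inter> (Z -` A \<inter> space M) = S \<inter> Z -` A"
      using sets.sets_into_space[OF that(1)] by blast
    ultimately show ?thesis
      unfolding law_def emeasure_distr[OF Z_restricted that(2)] using that
      by (simp add: ennreal_indicator emeasure_restricted emeasure_eq_measure)
  qed
  have "law E = density (law F) (\<lambda>_. ennreal c)"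
  proof (rule measure_eqI)
    fix A
    assume "A \<in> sets (law E)"
    then have A: "A \<in> sets borel"
      by (simp add: law_def)
    then have "emeasure (law E) A = ennreal c * emeasure (law F) A"
      using E F \<open>0 \<le> c\<close> by (simp add: emeasure_law proportional ennreal_mult)
    then show "emeasure (law E) A = emeasure (density (law F) (\<lambda>_. ennreal c)) A"
      using A by (simp add: emeasure_density_const law_def)
  qed (simp add: law_def)
  then have "(\<integral>x. x \<partial>law E) = c *\<^sub>R (\<integral>x. x \<partial>law F)"
    using \<open>0 \<le> c\<close> by (simp add: integral_density law_def)
  then show ?thesis
    using E F by (simp add: integral_law)
qed

lemma (in finite_measure) markov_chain3_set_mean_eq:
  assumes Z: "Z \<in> borel_measurable M"
    and X1: "X1 \<in> measurable M (count_space UNIV)" and X0: "X0 \<in> measurable M (count_space UNIV)"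
    and markov: "markov_chain3 M X0 X1 Z"
    and pos: "0 < measure M {w \<in> space M. X1 w = a \<and> X0 w = b}"
  shows "set_mean M Z {w \<in> space M. X1 w = a \<and> X0 w = b} = set_mean M Z {w \<in> space M. X1 w = a}"
proof -
  define E where "E = {w \<in> space M. X1 w = a \<and> X0 w = b}"
  define F where "F = {w \<in> space M. X1 w = a}"
  have sets: "E \<in> sets M" "F \<in> sets M"
    unfolding E_def F_def using X1 X0 by measurable
  have "measure M E \<le> measure M F"
    using sets by (intro finite_measure_mono) (auto simp: E_def F_def)
  then have posF: "0 < measure M F"
    using pos unfolding E_def by linarith
  have "(\<integral>v. indicator E v *\<^sub>R Z v \<partial>M) = (measure M E / measure M F) *\<^sub>R (\<integral>v. indicator F v *\<^sub>R Z v \<partial>M)"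
  proof (rule set_integral_eq_scaleR_if_proportional[OF Z sets])
    fix A :: "'b set"
    assume "A \<in> sets borel"
    then have "measure M {w \<in> space M. Z w \<in> A \<and> X0 w = b \<and> X1 w = a} * measure M F
        = measure M {w \<in> space M. Z w \<in> A \<and> X1 w = a} * measure M E"
      using markov unfolding markov_chain3_def E_def F_def by (simp add: conj_commute)
    moreover have "E \<inter> Z -` A = {w \<in> space M. Z w \<in> A \<and> X0 w = b \<and> X1 w = a}"
      "F \<inter> Z -` A = {w \<in> space M. Z w \<in> A \<and> X1 w = a}"
      unfolding E_def F_def by auto
    ultimately show "measure M (E \<inter> Z -` A) = measure M E / measure M F * measure M (F \<inter> Z -` A)"
      using posF by (simp add: field_simps)
  qed simp
  then show ?thesis
    using pos posF unfolding E_def[symmetric] F_def[symmetric] by (simp add: set_mean_def)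
qed

lemma (in finite_measure) markov_chain3_sq_dist_set_mean_le:
  assumes Z: "Z \<in> borel_measurable M" and ZB: "AE w in M. norm (Z w) \<le> B"
    and X1: "X1 \<in> measurable M (count_space UNIV)" and X0: "X0 \<in> measurable M (count_space UNIV)"
    and markov: "markov_chain3 M X0 X1 Z"
    and pos: "0 < measure M {w \<in> space M. X1 w = a \<and> X0 w = b}"
  shows "(norm (set_mean M Z {w \<in> space M. X1 w = a} - set_mean M Z {w \<in> space M. X0 w = b}))\<^sup>2
    \<le> 2 * B\<^sup>2 * ln (measure M {w \<in> space M. X0 w = b} / measure M {w \<in> space M. X1 w = a \<and> X0 w = b})"
proof -
  define E where "E = {w \<in> space M. X1 w = a \<and> X0 w = b}"
  define F where "F = {w \<in> space M. X0 w = b}"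
  define t where "t = measure M E / measure M F"
  have sets: "E \<in> sets M" "F \<in> sets M"
    unfolding E_def F_def using X1 X0 by measurable
  have "E \<subseteq> F"
    unfolding E_def F_def by blast
  then have "measure M E \<le> measure M F"
    using sets by (intro finite_measure_mono)
  then have t: "0 < t" "t \<le> 1"
    using pos unfolding t_def E_def[symmetric] by auto
  have "norm (set_mean M Z {w \<in> space M. X1 w = a} - set_mean M Z F) \<le> 2 * B * (1 - t)"
    using norm_set_mean_diff_le[OF Z ZB sets \<open>E \<subseteq> F\<close>] pos
      markov_chain3_set_mean_eq[OF Z X1 X0 markov pos]
    unfolding t_def E_def by simp
  then have "(norm (set_mean M Z {w \<in> space M. X1 w = a} - set_mean M Z F))\<^sup>2 \<le> (2 * B * (1 - t))\<^sup>2"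
    by (intro power_mono) simp_all
  also have "\<dots> = 2 * B\<^sup>2 * (2 * (1 - t)\<^sup>2)"
    by (simp add: power_mult_distrib)
  also have "\<dots> \<le> 2 * B\<^sup>2 * - ln t"
    using ln_le_neg_two_mul_sq[OF t] by (intro mult_left_mono) simp_all
  also have "- ln t = ln (measure M F / measure M E)"
    using t pos unfolding t_def E_def[symmetric] by (simp add: ln_div)
  finally show ?thesis
    unfolding E_def F_def .
qed

lemma (in finite_measure) markov_chain3_atom_le_entropy_term:
  fixes a :: 'b and b :: 'c
  assumes Z: "Z \<in> borel_measurable M" and ZB: "AE w in M. norm (Z w) \<le> B"
    and X1: "X1 \<in> measurable M (count_space UNIV)" and X0: "X0 \<in> measurable M (count_space UNIV)"
    and markov: "markov_chain3 M X0 X1 Z"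
  defines "pab \<equiv> measure M {w \<in> space M. X1 w = a \<and> X0 w = b}"
    and "pb \<equiv> measure M {w \<in> space M. X0 w = b}"
  shows "ennreal ((norm (set_mean M Z {w \<in> space M. X1 w = a} - set_mean M Z {w \<in> space M. X0 w = b}))\<^sup>2)
      * emeasure M {w \<in> space M. X1 w = a \<and> X0 w = b}
    \<le> ennreal (2 * B\<^sup>2) * ennreal (if pab = 0 then 0 else pab * ln (pb / pab))"
proof (cases "pab = 0")
  case True
  then show ?thesis
    by (simp add: emeasure_eq_measure pab_def)
next
  case False
  then have pos: "0 < pab"
    unfolding pab_def using measure_nonneg by (simp add: order_le_neq_trans)
  define dist2 where "dist2 = (norm (set_mean M Z {w \<in> space M. X1 w = a}
    - set_mean M Z {w \<in> space M. X0 w = b}))\<^sup>2"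
  have "dist2 * pab \<le> 2 * B\<^sup>2 * (pab * ln (pb / pab))"
    using mult_right_mono[OF markov_chain3_sq_dist_set_mean_le[OF Z ZB X1 X0 markov], of a b pab] pos
    unfolding dist2_def pab_def pb_def by (simp add: mult_ac)
  then have "ennreal (dist2 * pab) \<le> ennreal (2 * B\<^sup>2) * ennreal (pab * ln (pb / pab))"
    by (subst ennreal_mult'[symmetric]) (simp_all add: ennreal_leI)
  then show ?thesis
    using pos False unfolding dist2_def[symmetric]
    by (simp add: emeasure_eq_measure ennreal_mult'' pab_def)
qed

theorem theorem5:
  fixes M :: "'a measure" and Z :: "'a \<Rightarrow> real ^ 'n"
    and X1 :: "'a \<Rightarrow> 'b::countable" and X0 :: "'a \<Rightarrow> 'c::countable" and B :: real
  assumes "prob_space M"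
    and "Z \<in> borel_measurable M"
    and "X1 \<in> measurable M (count_space UNIV)"
    and "X0 \<in> measurable M (count_space UNIV)"
    and "B \<ge> 0"
    and "AE w in M. norm (Z w) \<le> B"
    and "markov_chain3 M X0 X1 Z"
  shows "(\<integral>\<^sup>+ w. ennreal ((norm (cexp_disc M Z X1 w - cexp_disc M Z X0 w))\<^sup>2) \<partial>M)
           \<le> ennreal (2 * B\<^sup>2) * cond_entropy_disc M X1 X0"
proof -
  interpret prob_space M by fact
  define dist2 where "dist2 ab = ennreal ((norm (set_mean M Z {w \<in> space M. X1 w = fst ab}
    - set_mean M Z {w \<in> space M. X0 w = snd ab}))\<^sup>2)" for ab
  have "(\<lambda>w. (X1 w, X0 w)) \<in> measurable M (count_space UNIV)"
    using assms(3,4) by measurable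
  then have "(\<integral>\<^sup>+ w. ennreal ((norm (cexp_disc M Z X1 w - cexp_disc M Z X0 w))\<^sup>2) \<partial>M)
      = (\<integral>\<^sup>+ ab. dist2 ab * emeasure M {w \<in> space M. (X1 w, X0 w) = ab} \<partial>count_space UNIV)"
    using nn_integral_comp_discrete[of "\<lambda>w. (X1 w, X0 w)" M dist2]
    by (simp add: cexp_disc_eq_set_mean dist2_def)
  also have "\<dots> \<le> ennreal (2 * B\<^sup>2) * cond_entropy_disc M X1 X0"
    unfolding cond_entropy_disc_def nn_integral_cmult[symmetric, OF borel_measurable_count_space]
    using markov_chain3_atom_le_entropy_term[OF assms(2,6,3,4,7)]
    by (intro nn_integral_mono) (simp add: dist2_def Let_def prod_eq_iff split del: if_split)
  finally show ?thesis .
qed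

end
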